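(* If $(a,b)\in R_3$, then $J(a,b)\ge \frac{9+8\sqrt{10}}{215}$.
   Context: For $(a,b)\in\mathbb R^2$ define $f_{a,b}(x_1,x_2)=[b+a(x_1+x_2)+x_1x_2](2-x_1-x_2)$. Let $X_1=\{(x_1,x_2):-1\le x_1\le 0,\ -x_1\le x_2\le 1\}$ and $X_2=\{(x_1,x_2):-1\le x_1\le0,\ x_1\le x_2\le -x_1\}$. Let $\chi_{a,b}=\max_{X_1\cup X_2}f_{a,b}$, $m_{a,b}=\min_{X_1\cup X_2}f_{a,b}$, $R=\{(a,b)\in\mathbb R^2: m_{a,b}>0\}$, and for $(a,b)\in R$ let $J(a,b)=\frac{\chi_{a,b}-m_{a,b}}{\chi_{a,b}+m_{a,b}}$. Whenever $(1-2a)^2\ge3(b-2a)$ let $t_-=\frac{2a-1-\sqrt{(1-2a)^2-3(b-2a)}}{3/2}$. Let $R_3=\{(a,b)\in R:(1-2a)^2\ge3(b-2a)>0,\ t_-\in[0,2]\}$. *)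

theory Defs
  imports Complex_Main
begin

definition fab :: "real \<Rightarrow> real \<Rightarrow> real \<times> real \<Rightarrow> real" where
  "fab a b x = (b + a * (fst x + snd x) + fst x * snd x) * (2 - fst x - snd x)"

definition X1 :: "(real \<times> real) set" where
  "X1 = {(x1, x2). -1 \<le> x1 \<and> x1 \<le> 0 \<and> -x1 \<le> x2 \<and> x2 \<le> 1}"

definition X2 :: "(real \<times> real) set" where
  "X2 = {(x1, x2). -1 \<le> x1 \<and> x1 \<le> 0 \<and> x1 \<le> x2 \<and> x2 \<le> -x1}"

text \<open>Maximum and minimum over the compact set X1 \<union> X2 (attained, since f is continuous).\<close>
definition chi :: "real \<Rightarrow> real \<Rightarrow> real" where
  "chi a b = (SUP x\<in>X1 \<union> X2. fab a b x)"

definition mab :: "real \<Rightarrow> real \<Rightarrow> real" where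
  "mab a b = (INF x\<in>X1 \<union> X2. fab a b x)"

definition Rset :: "(real \<times> real) set" where
  "Rset = {(a, b). mab a b > 0}"

definition J :: "real \<Rightarrow> real \<Rightarrow> real" where
  "J a b = (chi a b - mab a b) / (chi a b + mab a b)"

definition tminus :: "real \<Rightarrow> real \<Rightarrow> real" where
  "tminus a b = (2*a - 1 - sqrt ((1 - 2*a)^2 - 3*(b - 2*a))) / (3/2)"

definition R3 :: "(real \<times> real) set" where
  "R3 = {(a, b). (a, b) \<in> Rset \<and> (1 - 2*a)^2 \<ge> 3*(b - 2*a) \<and> 3*(b - 2*a) > 0
               \<and> 0 \<le> tminus a b \<and> tminus a b \<le> 2}"

end

theory Submission
  imports Defs "HOL-Analysis.Analysis"
begin

(* With t = t_-, the test point (-t/2, -t/2) gives chi >= (2 + t)^2 (a - t/2), while the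
   test points (-1, 1), (0, 1), (-1, -1) bound m by 2(b - 1), a + b and 4(b - 2a + 1).
   A nonnegative combination of these three bounds with total weight 112 + 4 sqrt 10 differs
   from (103 - 4 sqrt 10) (2 + t)^2 (a - t/2) by a square in t times a factor linear in a;
   where that factor is negative, t is so small that cruder estimates suffice. Hence
   (112 + 4 sqrt 10) m <= (103 - 4 sqrt 10) chi, which is the claimed bound on J. *)

lemma diff_div_sum_ge:
  fixes c m p q :: real
  assumes "0 < m" "0 < p" "0 < q" "p * m \<le> q * c"
  shows "(p - q) / (p + q) \<le> (c - m) / (c + m)"
proof -
  have "0 < q * c" using assms by (meson mult_pos_pos order_less_le_trans)
  then have "0 < c" using \<open>0 < q\<close> by (simp add: zero_less_mult_iff)
  then show ?thesis using assms by (simp add: divide_simps) (simp add: algebra_simps)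
qed

lemma sqrt_10_bounds: "3 \<le> sqrt 10" "sqrt 10 \<le> 7/2"
  by (rule real_le_rsqrt, simp) (rule real_le_lsqrt, simp_all add: power2_eq_square)

lemma bounded_fab_image: "bounded (fab a b ` (X1 \<union> X2))"
proof -
  have "X1 \<union> X2 \<subseteq> {-1..0} \<times> {-1..1}" by (auto simp: X1_def X2_def)
  moreover have "compact (fab a b ` ({-1..0} \<times> {-1..1}))"
    unfolding fab_def by (intro compact_continuous_image compact_Times compact_Icc continuous_intros)
  ultimately show ?thesis by (meson bounded_subset compact_imp_bounded image_mono)
qed

lemma fab_le_chi: "x \<in> X1 \<union> X2 \<Longrightarrow> fab a b x \<le> chi a b"
  unfolding chi_def by (rule cSUP_upper[OF _ bounded_imp_bdd_above[OF bounded_fab_image]])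

lemma mab_le_fab: "x \<in> X1 \<union> X2 \<Longrightarrow> mab a b \<le> fab a b x"
  unfolding mab_def by (rule cINF_lower[OF bounded_imp_bdd_below[OF bounded_fab_image]])

(* t_- is a critical point of t \<mapsto> f(-t/2, -t/2) = (b - a t + t^2/4)(2 + t); the identity for b
   below is exactly the vanishing of its derivative. *)
lemma R3_parametrization:
  assumes "(a, b) \<in> R3"
  defines "t \<equiv> tminus a b"
  shows "0 < mab a b" "0 \<le> t" "t \<le> 2" "1/2 + 3*t/4 \<le> a" "b = 2*a + 2*a*t - t - 3*t^2/4"
proof -
  define D where "D = (1 - 2*a)^2 - 3*(b - 2*a)"
  have "D \<ge> 0" using assms unfolding R3_def D_def by auto
  show "0 < mab a b" "0 \<le> t" "t \<le> 2"
    using assms unfolding R3_def Rset_def D_def t_def by auto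
  have sqrt_D: "sqrt D = 2*a - 1 - 3*t/2"
    unfolding t_def tminus_def D_def by (simp add: field_simps)
  then show "1/2 + 3*t/4 \<le> a"
    using real_sqrt_ge_zero[OF \<open>D \<ge> 0\<close>] by linarith
  have "D = (2*a - 1 - 3*t/2)^2"
    using \<open>D \<ge> 0\<close> sqrt_D by (metis real_sqrt_pow2)
  then show "b = 2*a + 2*a*t - t - 3*t^2/4"
    unfolding D_def by (simp add: power2_eq_square algebra_simps)
qed

lemma test_values_bound_certificate:
  fixes a b t m r :: real
  assumes r: "r * r = 10" "3 \<le> r" "r \<le> 7/2"
    and b: "b = 2*a + 2*a*t - t - 3*t^2/4"
    and m: "m \<le> 2*(b - 1)" "m \<le> a + b" "m \<le> 4*(b - 2*a + 1)"
    and factor: "0 \<le> a - t/2 + (r - 8)/9"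
  shows "(112 + 4*r) * m \<le> (103 - 4*r) * ((2 + t)^2 * (a - t/2))"
proof -
  define w1 w2 w3 where "w1 = 34*r - 80" and "w2 = (224 + 8*r)/3" and "w3 = (352 - 98*r)/3"
  have w: "0 \<le> w1" "0 \<le> w2" "0 \<le> w3" "w1 + w2 + w3 = 112 + 4*r"
    using r unfolding w1_def w2_def w3_def by (auto simp: field_simps)
  have certificate:
    "(103 - 4*r) * ((2 + t)^2 * (a - t/2)) - (w1 * (2*(b - 1)) + w2 * (a + b) + w3 * (4*(b - 2*a + 1)))
      = (103 - 4*r) * (t - (14 - 4*r)/9)^2 * (a - t/2 + (r - 8)/9)"
  proof -
    have r_square: "r * (r * x) = 10 * x" for x using r(1) by (metis mult.assoc)
    show ?thesis unfolding b w1_def w2_def w3_def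
      by (simp add: algebra_simps power2_eq_square divide_simps r_square)
  qed
  have "(112 + 4*r) * m = w1 * m + w2 * m + w3 * m" by (simp only: w(4)[symmetric] distrib_right)
  also have "\<dots> \<le> w1 * (2*(b - 1)) + w2 * (a + b) + w3 * (4*(b - 2*a + 1))"
    using w m by (intro add_mono mult_left_mono)
  also have "\<dots> \<le> (103 - 4*r) * ((2 + t)^2 * (a - t/2))"
  proof -
    have "0 \<le> (103 - 4*r) * (t - (14 - 4*r)/9)^2 * (a - t/2 + (r - 8)/9)"
      using factor r(3) by simp
    then show ?thesis using certificate by linarith
  qed
  finally show ?thesis .
qed

lemma test_values_bound_small_t:
  fixes a b t m r :: real
  assumes r: "3 \<le> r" "r \<le> 7/2"
    and t: "0 \<le> t" and a: "1/2 + 3*t/4 \<le> a" and b: "b = 2*a + 2*a*t - t - 3*t^2/4"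
    and m: "m \<le> 2*(b - 1)"
    and factor: "a - t/2 + (r - 8)/9 < 0"
  shows "(112 + 4*r) * m \<le> (103 - 4*r) * ((2 + t)^2 * (a - t/2))"
proof -
  have "a - t/2 < 5/9" using factor r(1) by (simp add: field_simps)
  then have t_small: "t < 2/9" and a_small: "a < 2/3" using a by linarith+
  have "2*(b - 1) = 4*a*(1 + t) - 2 - 2*t - 3*t^2/2" unfolding b by (simp add: algebra_simps)
  then have "m \<le> 4*a*(1 + t) - 2" using m t zero_le_power2[of t] by linarith
  also have "\<dots> \<le> 4*(2/3)*(1 + 2/9) - 2"
    using t t_small a_small a by (intro diff_right_mono mult_mono) auto
  finally have m_le: "m \<le> 34/27" by simp
  have h_ge: "4 * (1/2) \<le> (2 + t)^2 * (a - t/2)"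
    using t a by (intro mult_mono) (auto simp: power2_eq_square algebra_simps)
  have "(112 + 4*r) * m \<le> (112 + 4*r) * (34/27)"
    using m_le r by (intro mult_left_mono) auto
  also have "\<dots> \<le> (103 - 4*r) * 2" using r by simp
  also have "\<dots> \<le> (103 - 4*r) * ((2 + t)^2 * (a - t/2))"
    using h_ge r by (intro mult_left_mono) auto
  finally show ?thesis .
qed

lemma test_values_bound:
  fixes a b t m :: real
  assumes t: "0 \<le> t" and a: "1/2 + 3*t/4 \<le> a" and b: "b = 2*a + 2*a*t - t - 3*t^2/4"
    and m: "m \<le> 2*(b - 1)" "m \<le> a + b" "m \<le> 4*(b - 2*a + 1)"
  shows "(112 + 4 * sqrt 10) * m \<le> (103 - 4 * sqrt 10) * ((2 + t)^2 * (a - t/2))"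
proof (cases "0 \<le> a - t/2 + (sqrt 10 - 8)/9")
  case True
  show ?thesis
    by (rule test_values_bound_certificate[OF _ sqrt_10_bounds b m True]) simp
next
  case False
  then show ?thesis
    using test_values_bound_small_t[OF sqrt_10_bounds t a b m(1)] by simp
qed

theorem propositionA9:
  fixes a b :: real
  assumes "(a, b) \<in> R3"
  shows "J a b \<ge> (9 + 8 * sqrt 10) / 215"
proof -
  define t where "t = tminus a b"
  note param = R3_parametrization[OF assms, folded t_def]
  have "(-t/2, -t/2) \<in> X1 \<union> X2" "(-1, 1) \<in> X1 \<union> X2" "(0, 1) \<in> X1 \<union> X2" "(-1, -1) \<in> X1 \<union> X2"
    using param(2,3) by (auto simp: X1_def X2_def)
  note chi_diagonal = fab_le_chi[OF this(1), of a b] and m = this(2-4)[THEN mab_le_fab[of _ a b]]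
  have "fab a b (-t/2, -t/2) = (2 + t)^2 * (a - t/2)"
    unfolding fab_def param(5) by (simp add: power2_eq_square algebra_simps)
  with chi_diagonal have chi: "(2 + t)^2 * (a - t/2) \<le> chi a b" by simp
  have "(112 + 4 * sqrt 10) * mab a b \<le> (103 - 4 * sqrt 10) * ((2 + t)^2 * (a - t/2))"
    using test_values_bound[OF param(2,4,5)] m by (simp add: fab_def)
  also have "\<dots> \<le> (103 - 4 * sqrt 10) * chi a b"
    using chi sqrt_10_bounds by (intro mult_left_mono) auto
  finally have "(112 + 4 * sqrt 10) * mab a b \<le> (103 - 4 * sqrt 10) * chi a b" .
  moreover have "0 < 112 + 4 * sqrt 10" "0 < 103 - 4 * sqrt 10" using sqrt_10_bounds by auto
  ultimately have "((112 + 4 * sqrt 10) - (103 - 4 * sqrt 10)) / ((112 + 4 * sqrt 10) + (103 - 4 * sqrt 10))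
      \<le> J a b"
    unfolding J_def using diff_div_sum_ge[OF param(1)] by blast
  then show ?thesis by simp
qed

end
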